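(* Let $m\ge2$ and let $k\ge2$ divide $m$. Consider $n=m$ voters and alternatives $a_1,\dots,a_m$, where voter $i$ ranks $a_i$ first. For every partition of the voters into $k$ districts of $m/k$ voters each, there exist a unit-sum valuation profile consistent with these first choices and a resolution of ties such that, in the resulting district-based election with Plurality Voting in each district and unit weights, the election winner $x$ satisfies $\max_j\mathrm{SW}(j\mid\mathbf v)/\mathrm{SW}(x\mid\mathbf v)\ge1+\frac{m^2}{2}$. In particular, there are instances in which every symmetric $k$-districting yields distributed distortion $\Omega(m^2)$ for Plurality Voting.
   Context: Valuations satisfy $v_{ij}\ge0$, $\sum_j v_{ij}=1$; a voter's ranking is induced by her valuations with ties among equal values broken arbitrarily, and "consistent with first choices" means voter $i$'s induced ranking (under some tie-breaking) has $a_i$ first. $\mathrm{SW}(j\mid\mathbf v)=\sum_i v_{ij}$. Plurality Voting in a district elects an alternative ranked first by the most voters of the district (ties arbitrary); the election winner is an alternative that is the local winner in the maximum number of districts (ties arbitrary). *)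

theory Defs
  imports Complex_Main
begin

text \<open>Voters and alternatives are both indexed by 0..m-1 (so n = m voters);
  v i j is the valuation of voter i for alternative j.\<close>

definition unit_sum_profile :: "nat \<Rightarrow> (nat \<Rightarrow> nat \<Rightarrow> real) \<Rightarrow> bool" where
  "unit_sum_profile m v \<longleftrightarrow>
     (\<forall>i<m. (\<forall>j<m. v i j \<ge> 0) \<and> (\<Sum>j<m. v i j) = 1)"

text \<open>Voter i's induced ranking (under some tie-breaking) has top a i
  iff a i is an alternative of maximal value for i.\<close>
definition consistent_first :: "nat \<Rightarrow> (nat \<Rightarrow> nat \<Rightarrow> real) \<Rightarrow> (nat \<Rightarrow> nat) \<Rightarrow> bool" where
  "consistent_first m v a \<longleftrightarrow> (\<forall>i<m. a i < m \<and> (\<forall>j<m. v i j \<le> v i (a i)))"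

definition SW :: "nat \<Rightarrow> (nat \<Rightarrow> nat \<Rightarrow> real) \<Rightarrow> nat \<Rightarrow> real" where
  "SW n v j = (\<Sum>i<n. v i j)"

definition symmetric_districting :: "nat \<Rightarrow> nat \<Rightarrow> (nat \<Rightarrow> nat) \<Rightarrow> bool" where
  "symmetric_districting n k d \<longleftrightarrow>
     (\<forall>i<n. d i < k) \<and> (\<forall>t<k. card {i. i < n \<and> d i = t} = n div k)"

definition plurality_score :: "nat \<Rightarrow> (nat \<Rightarrow> nat) \<Rightarrow> (nat \<Rightarrow> nat) \<Rightarrow> nat \<Rightarrow> nat \<Rightarrow> nat" where
  "plurality_score n d a t j = card {i. i < n \<and> d i = t \<and> a i = j}"

definition plurality_winner :: "nat \<Rightarrow> nat \<Rightarrow> (nat \<Rightarrow> nat) \<Rightarrow> (nat \<Rightarrow> nat) \<Rightarrow> nat \<Rightarrow> nat \<Rightarrow> bool" where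
  "plurality_winner n m d a t w \<longleftrightarrow>
     w < m \<and> (\<forall>j<m. plurality_score n d a t j \<le> plurality_score n d a t w)"

definition election_winner :: "nat \<Rightarrow> nat \<Rightarrow> (nat \<Rightarrow> nat) \<Rightarrow> nat \<Rightarrow> bool" where
  "election_winner m k w x \<longleftrightarrow>
     x < m \<and> (\<forall>j<m. card {t. t < k \<and> w t = j} \<le> card {t. t < k \<and> w t = x})"

end

theory Submission
  imports Defs
begin

text \<open>Every district contains some voter; pick one, \<open>w t\<close>, per district. As all first
  choices are distinct, \<open>w t\<close> is a plurality winner of district \<open>t\<close>, and distinct
  districts get distinct local winners, so each local winner, in particular \<open>x = w 0\<close>,
  wins the election with a single district. Now let voter \<open>x\<close> value all alternatives
  equally at \<open>1/m\<close>, and every other voter \<open>i\<close> put \<open>1/2\<close> on \<open>i\<close> and \<open>1/2\<close> on a fixed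
  \<open>y \<noteq> x\<close>. Then \<open>SW(x) = 1/m\<close> while \<open>SW(y) = m/2 + 1/m\<close>, a ratio of \<open>1 + m\<^sup>2/2\<close>.\<close>

lemma symmetric_districting_district_nonempty:
  assumes "symmetric_districting n k d" and "k \<le> n" and "t < k"
  shows "\<exists>i<n. d i = t"
proof -
  have "0 < n div k" using assms(2,3) by (simp add: div_greater_zero_iff)
  then have "card {i. i < n \<and> d i = t} \<noteq> 0"
    using assms(1,3) unfolding symmetric_districting_def by simp
  then show ?thesis by (metis (mono_tags, lifting) card.empty empty_Collect_eq)
qed

lemma plurality_score_distinct_tops_le_1:
  "plurality_score n d (\<lambda>i. i) t j \<le> 1"
proof -
  have "{i. i < n \<and> d i = t \<and> i = j} \<subseteq> {j}" by auto
  then have "card {i. i < n \<and> d i = t \<and> i = j} \<le> card {j}" by (rule card_mono[rotated]) simp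
  then show ?thesis unfolding plurality_score_def by simp
qed

lemma plurality_winner_distinct_tops:
  assumes "i < n" and "i < m" and "d i = t"
  shows "plurality_winner n m d (\<lambda>i. i) t i"
proof -
  have "{i'. i' < n \<and> d i' = t \<and> i' = i} = {i}" using assms by auto
  then have "plurality_score n d (\<lambda>i. i) t i = 1" by (simp add: plurality_score_def)
  then show ?thesis
    unfolding plurality_winner_def using assms(2) plurality_score_distinct_tops_le_1 by auto
qed

lemma election_winner_inj_on:
  assumes "inj_on w {..<k}" and "t < k" and "w t < m"
  shows "election_winner m k w (w t)"
  unfolding election_winner_def
proof (intro conjI allI impI)
  fix j
  have "card {s. s < k \<and> w s = j} \<le> 1"
    using assms(1) by (auto simp: card_le_Suc0_iff_eq inj_on_def)
  moreover have "{s. s < k \<and> w s = w t} = {t}"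
    using assms(1,2) by (auto simp: inj_on_def)
  ultimately show "card {s. s < k \<and> w s = j} \<le> card {s. s < k \<and> w s = w t}"
    by simp
qed (use assms(3) in simp)

definition bad_profile :: "nat \<Rightarrow> nat \<Rightarrow> nat \<Rightarrow> nat \<Rightarrow> nat \<Rightarrow> real" where
  "bad_profile m x y i j =
     (if i = x then 1 / real m else (if j = i then 1/2 else 0) + (if j = y then 1/2 else 0))"

context
  fixes m x y :: nat
  assumes x: "x < m" and y: "y < m" and xy: "x \<noteq> y"
begin

lemma unit_sum_bad_profile: "unit_sum_profile m (bad_profile m x y)"
  unfolding unit_sum_profile_def
proof (intro allI impI conjI)
  fix i j show "bad_profile m x y i j \<ge> 0" by (simp add: bad_profile_def)
next
  fix i assume i: "i < m"
  show "(\<Sum>j<m. bad_profile m x y i j) = 1"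
  proof (cases "i = x")
    case True then show ?thesis using x by (simp add: bad_profile_def)
  next
    case False then show ?thesis
      using i y by (simp add: bad_profile_def sum.distrib sum.delta')
  qed
qed

lemma consistent_first_bad_profile: "consistent_first m (bad_profile m x y) (\<lambda>i. i)"
  unfolding consistent_first_def bad_profile_def by auto

lemma SW_bad_profile_low: "SW m (bad_profile m x y) x = 1 / real m"
proof -
  have "SW m (bad_profile m x y) x = (\<Sum>i<m. if i = x then 1 / real m else 0)"
    unfolding SW_def by (rule sum.cong) (use xy in \<open>auto simp: bad_profile_def\<close>)
  then show ?thesis using x by (simp add: sum.delta')
qed

lemma SW_bad_profile_high: "SW m (bad_profile m x y) y = real m / 2 + 1 / real m"
proof -
  have "SW m (bad_profile m x y) y =
      (\<Sum>i<m. 1/2 + (if i = x then 1 / real m - 1/2 else 0) + (if i = y then 1/2 else 0))"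
    unfolding SW_def by (rule sum.cong) (use xy in \<open>auto simp: bad_profile_def\<close>)
  then show ?thesis using x y by (simp add: sum.distrib sum.delta')
qed

lemma bad_profile_distortion:
  "Max (SW m (bad_profile m x y) ` {..<m}) / SW m (bad_profile m x y) x \<ge> 1 + real m ^ 2 / 2"
proof -
  let ?SW = "SW m (bad_profile m x y)"
  have m: "real m > 0" using x by simp
  have "1 + real m ^ 2 / 2 = ?SW y / ?SW x"
    using m unfolding SW_bad_profile_low SW_bad_profile_high
    by (simp add: field_simps power2_eq_square)
  also have "\<dots> \<le> Max (?SW ` {..<m}) / ?SW x"
    using y m by (intro divide_right_mono Max_ge) (auto simp: SW_bad_profile_low)
  finally show ?thesis .
qed

end

theorem theorem9:
  fixes m k :: nat and d :: "nat \<Rightarrow> nat"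
  assumes "m \<ge> 2" and "k \<ge> 2" and "k dvd m"
    and "symmetric_districting m k d"
  shows "\<exists>v w x. unit_sum_profile m v \<and> consistent_first m v (\<lambda>i. i)
           \<and> (\<forall>t<k. plurality_winner m m d (\<lambda>i. i) t (w t))
           \<and> election_winner m k w x
           \<and> Max (SW m v ` {..<m}) / SW m v x \<ge> 1 + real m ^ 2 / 2"
proof -
  have "k \<le> m" using assms(1,3) by (intro dvd_imp_le) auto
  then have "\<forall>t. \<exists>i. t < k \<longrightarrow> i < m \<and> d i = t"
    using symmetric_districting_district_nonempty[OF assms(4)] by blast
  then obtain w where w: "\<And>t. t < k \<Longrightarrow> w t < m \<and> d (w t) = t"
    by (metis choice)
  have local_winners: "\<forall>t<k. plurality_winner m m d (\<lambda>i. i) t (w t)"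
    using w plurality_winner_distinct_tops by blast
  have "inj_on w {..<k}" by (rule inj_onI) (metis w lessThan_iff)
  then have winner: "election_winner m k w (w 0)"
    using w assms(2) by (intro election_winner_inj_on) auto
  define y :: nat where "y = (if w 0 = 0 then 1 else 0)"
  have "w 0 < m" "y < m" "w 0 \<noteq> y" using w[of 0] assms(1,2) y_def by auto
  then show ?thesis
    using local_winners winner unit_sum_bad_profile consistent_first_bad_profile
      bad_profile_distortion
    by (intro exI[of _ "bad_profile m (w 0) y"] exI[of _ w] exI[of _ "w 0"]) simp
qed

end
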